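(* For every integer $g$ there is $t=t(g)$ such that for every $k\ge t$ there is a $k$-vertex exactly-$(2,t)$-degenerate bipartite graph of girth at least $g$.
   Context: A graph is exactly-$(2,t)$-degenerate if it can be obtained from a set of $t$ isolated vertices by repeatedly adding a new vertex adjacent to exactly $2$ of the existing vertices. The girth of a graph is the length of its shortest cycle (infinite if the graph has no cycle). *)

theory Defs
  imports Main
begin

definition simple_graph :: "'a set \<Rightarrow> ('a \<Rightarrow> 'a \<Rightarrow> bool) \<Rightarrow> bool" where
  "simple_graph V E \<longleftrightarrow> finite V \<and> (\<forall>x y. E x y \<longrightarrow> x \<in> V \<and> y \<in> V) \<and>
     (\<forall>x y. E x y \<longrightarrow> E y x) \<and> (\<forall>x. \<not> E x x)"

text \<open>Since every edge joins
  a vertex to an earlier one, this says precisely that the graph arises from t isolated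
  vertices by repeatedly adding a new vertex adjacent to exactly 2 existing vertices.\<close>
definition exactly_2_t_degenerate :: "nat \<Rightarrow> 'a set \<Rightarrow> ('a \<Rightarrow> 'a \<Rightarrow> bool) \<Rightarrow> bool" where
  "exactly_2_t_degenerate t V E \<longleftrightarrow>
     (\<exists>vs. distinct vs \<and> set vs = V \<and> t \<le> length vs \<and>
        (\<forall>i j. i < t \<and> j < t \<longrightarrow> \<not> E (vs ! i) (vs ! j)) \<and>
        (\<forall>i. t \<le> i \<and> i < length vs \<longrightarrow> card {j. j < i \<and> E (vs ! i) (vs ! j)} = 2))"

definition bipartite :: "'a set \<Rightarrow> ('a \<Rightarrow> 'a \<Rightarrow> bool) \<Rightarrow> bool" where
  "bipartite V E \<longleftrightarrow> (\<exists>A. A \<subseteq> V \<and> (\<forall>x y. E x y \<longrightarrow> (x \<in> A \<longleftrightarrow> y \<notin> A)))"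

definition is_cycle :: "'a set \<Rightarrow> ('a \<Rightarrow> 'a \<Rightarrow> bool) \<Rightarrow> 'a list \<Rightarrow> bool" where
  "is_cycle V E cs \<longleftrightarrow> 3 \<le> length cs \<and> distinct cs \<and> set cs \<subseteq> V \<and>
     (\<forall>i. Suc i < length cs \<longrightarrow> E (cs ! i) (cs ! Suc i)) \<and> E (last cs) (hd cs)"

text \<open>Girth at least g: every cycle has length at least g (vacuous if acyclic,
  i.e. infinite girth).\<close>
definition girth_at_least :: "nat \<Rightarrow> 'a set \<Rightarrow> ('a \<Rightarrow> 'a \<Rightarrow> bool) \<Rightarrow> bool" where
  "girth_at_least g V E \<longleftrightarrow> (\<forall>cs. is_cycle V E cs \<longrightarrow> g \<le> length cs)"

end

theory Submission
  imports Defs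
begin

text \<open>Grow the graph from t isolated vertices, joining each new vertex w to two vertices
  u, v of degree at most 3 that lie on the same side of a bipartition and at distance more
  than g. Then w can be put on the other side, every new cycle runs through w and has length
  at least dist(u, v) + 2, and the maximum degree stays at most 4, so the ball of radius g
  around u has at most 5^g vertices. After n vertices there are 2(n - t) edges, so at most
  n - t vertices have degree 4; with t = 2 * 5^g + 1 more than 5^g vertices of degree at most 3
  lie on one side, so one of them lies outside the ball around another.\<close>

definition degree :: "('a \<Rightarrow> 'a \<Rightarrow> bool) \<Rightarrow> 'a \<Rightarrow> nat" where
  "degree E x = card {y. E x y}"

fun graph_ball :: "('a \<Rightarrow> 'a \<Rightarrow> bool) \<Rightarrow> nat \<Rightarrow> 'a \<Rightarrow> 'a set" where
  "graph_ball E 0 x = {x}"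
| "graph_ball E (Suc r) x = insert x (\<Union>y\<in>{y. E x y}. graph_ball E r y)"

lemma center_in_graph_ball: "x \<in> graph_ball E r x"
  by (cases r) auto

lemma graph_ball_mono: "r \<le> s \<Longrightarrow> graph_ball E r x \<subseteq> graph_ball E s x"
proof (induction r arbitrary: s x)
  case 0
  then show ?case by (simp add: center_in_graph_ball)
next
  case (Suc r)
  then obtain s' where "s = Suc s'" "r \<le> s'" by (cases s) auto
  with Suc.IH show ?case by fastforce
qed

lemma last_in_graph_ball:
  "successively E xs \<Longrightarrow> xs \<noteq> [] \<Longrightarrow> last xs \<in> graph_ball E (length xs - 1) (hd xs)"
proof (induction xs)
  case (Cons x xs)
  then show ?case by (cases xs) (auto simp: successively_Cons)
qed simp

lemma finite_graph_ball:
  assumes "\<And>x. finite {y. E x y}"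
  shows "finite (graph_ball E r x)"
  by (induction r arbitrary: x) (simp_all add: assms)

lemma card_graph_ball_le:
  assumes fin: "\<And>x. finite {y. E x y}" and deg: "\<And>x. degree E x \<le> d"
  shows "card (graph_ball E r x) \<le> Suc d ^ r"
proof (induction r arbitrary: x)
  case (Suc r)
  have "card (graph_ball E (Suc r) x) \<le> Suc (card (\<Union>y\<in>{y. E x y}. graph_ball E r y))"
    by (simp add: card_insert_le_m1 card_insert_if)
  also have "card (\<Union>y\<in>{y. E x y}. graph_ball E r y) \<le> (\<Sum>y\<in>{y. E x y}. card (graph_ball E r y))"
    using fin by (rule card_UN_le)
  also have "\<dots> \<le> degree E x * Suc d ^ r"
    using Suc.IH sum_mono[of "{y. E x y}" "\<lambda>y. card (graph_ball E r y)" "\<lambda>_. Suc d ^ r"]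
    by (simp add: degree_def)
  also have "\<dots> \<le> d * Suc d ^ r"
    using deg by simp
  finally have "card (graph_ball E (Suc r) x) \<le> Suc (d * Suc d ^ r)" by simp
  moreover have "1 \<le> Suc d ^ r" by simp
  ultimately show ?case by (simp only: power_Suc mult_Suc)
qed simp

lemma is_cycle_iff_successively:
  "is_cycle V E cs \<longleftrightarrow>
     3 \<le> length cs \<and> distinct cs \<and> set cs \<subseteq> V \<and> successively E cs \<and> E (last cs) (hd cs)"
  by (simp add: is_cycle_def successively_conv_nth)

lemma is_cycle_rotate: "is_cycle V E (xs @ ys) \<Longrightarrow> is_cycle V E (ys @ xs)"
  by (cases "xs = [] \<or> ys = []") (auto simp: is_cycle_iff_successively successively_append_iff)

definition attach_vertex :: "('a \<Rightarrow> 'a \<Rightarrow> bool) \<Rightarrow> 'a \<Rightarrow> 'a \<Rightarrow> 'a \<Rightarrow> 'a \<Rightarrow> 'a \<Rightarrow> bool" where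
  "attach_vertex E w u v x y \<longleftrightarrow>
     E x y \<or> (x = w \<and> (y = u \<or> y = v)) \<or> (y = w \<and> (x = u \<or> x = v))"

lemma simple_graph_attach_vertex:
  assumes "simple_graph V E" "w \<notin> V" "u \<in> V" "v \<in> V"
  shows "simple_graph (insert w V) (attach_vertex E w u v)"
  using assms by (auto simp: simple_graph_def attach_vertex_def)

lemma degree_attach_vertex:
  assumes "simple_graph V E" "w \<notin> V" "u \<in> V" "v \<in> V" "u \<noteq> v"
  shows "degree (attach_vertex E w u v) x =
    (if x = w then 2 else degree E x + (if x = u then 1 else 0) + (if x = v then 1 else 0))"
proof -
  have fin: "finite {y. E x y}" and noE: "\<not> E x w"
    using assms(1,2) finite_subset[of "{y. E x y}" V] by (auto simp: simple_graph_def)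
  show ?thesis
  proof (cases "x = w")
    case True
    then have "{y. attach_vertex E w u v x y} = {u, v}"
      using assms by (auto simp: simple_graph_def attach_vertex_def)
    with True \<open>u \<noteq> v\<close> show ?thesis by (simp add: degree_def)
  next
    case False
    then have "{y. attach_vertex E w u v x y} = {y. E x y} \<union> (if x = u \<or> x = v then {w} else {})"
      by (auto simp: attach_vertex_def)
    with False fin noE \<open>u \<noteq> v\<close> show ?thesis by (auto simp: degree_def)
  qed
qed

lemma sum_degree_attach_vertex:
  assumes G: "simple_graph V E" and "w \<notin> V" "u \<in> V" "v \<in> V" "u \<noteq> v"
  shows "(\<Sum>x\<in>insert w V. degree (attach_vertex E w u v) x) = (\<Sum>x\<in>V. degree E x) + 4"
proof -
  have "finite V"
    using G by (simp add: simple_graph_def)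
  have "(\<Sum>x\<in>V. degree (attach_vertex E w u v) x) =
      (\<Sum>x\<in>V. degree E x + (if x = u then 1 else 0) + (if x = v then 1 else 0))"
    using \<open>w \<notin> V\<close> by (intro sum.cong) (auto simp: degree_attach_vertex[OF assms])
  also have "\<dots> = (\<Sum>x\<in>V. degree E x) + 2"
    using \<open>finite V\<close> \<open>u \<in> V\<close> \<open>v \<in> V\<close> by (simp add: sum.distrib)
  finally show ?thesis
    using \<open>finite V\<close> \<open>w \<notin> V\<close> by (simp add: degree_attach_vertex[OF assms])
qed

lemma bipartite_attach_vertex:
  assumes "simple_graph V E" "A \<subseteq> V" "\<forall>x y. E x y \<longrightarrow> (x \<in> A \<longleftrightarrow> y \<notin> A)"
    and "w \<notin> V" "u \<in> V" "v \<in> V" "u \<in> A \<longleftrightarrow> v \<in> A"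
  shows "bipartite (insert w V) (attach_vertex E w u v)"
  unfolding bipartite_def
proof (intro exI conjI)
  let ?A = "if u \<in> A then A else insert w A"
  show "?A \<subseteq> insert w V" using assms(2) by auto
  show "\<forall>x y. attach_vertex E w u v x y \<longrightarrow> (x \<in> ?A \<longleftrightarrow> y \<notin> ?A)"
    using assms by (auto simp: simple_graph_def attach_vertex_def)
qed

lemma exactly_2_t_degenerate_attach_vertex:
  assumes deg: "exactly_2_t_degenerate t V E" and G: "simple_graph V E"
    and "w \<notin> V" "u \<in> V" "v \<in> V" "u \<noteq> v"
  shows "exactly_2_t_degenerate t (insert w V) (attach_vertex E w u v)"
proof -
  obtain vs where vs: "distinct vs" "set vs = V" "t \<le> length vs"
    and indep: "\<forall>i j. i < t \<and> j < t \<longrightarrow> \<not> E (vs ! i) (vs ! j)"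
    and back2: "\<forall>i. t \<le> i \<and> i < length vs \<longrightarrow> card {j. j < i \<and> E (vs ! i) (vs ! j)} = 2"
    using deg by (auto simp: exactly_2_t_degenerate_def)
  let ?E' = "attach_vertex E w u v"
  let ?vs' = "vs @ [w]"
  have old: "?E' (vs ! i) (vs ! j) = E (vs ! i) (vs ! j)" if "i < length vs" "j < length vs" for i j
    using that vs \<open>w \<notin> V\<close> nth_mem by (fastforce simp: attach_vertex_def)
  have new: "card {j. j < length vs \<and> ?E' w (vs ! j)} = 2"
  proof -
    have "{j. j < length vs \<and> ?E' w (vs ! j)} = {j. j < length vs \<and> vs ! j \<in> {u, v}}"
      using G \<open>w \<notin> V\<close> vs(2) nth_mem by (fastforce simp: simple_graph_def attach_vertex_def)
    moreover have "(!) vs ` {j. j < length vs \<and> vs ! j \<in> {u, v}} = {u, v}"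
      using vs(2) \<open>u \<in> V\<close> \<open>v \<in> V\<close> by (auto simp: in_set_conv_nth)
    moreover have "inj_on ((!) vs) {j. j < length vs \<and> vs ! j \<in> {u, v}}"
      using vs(1) by (simp add: inj_on_nth)
    ultimately show ?thesis
      using \<open>u \<noteq> v\<close> card_image by fastforce
  qed
  show ?thesis
    unfolding exactly_2_t_degenerate_def
  proof (intro exI conjI allI impI)
    show "distinct ?vs'" "set ?vs' = insert w V" "t \<le> length ?vs'"
      using vs \<open>w \<notin> V\<close> by auto
    fix i
    show "\<not> ?E' (?vs' ! i) (?vs' ! j)" if "i < t \<and> j < t" for j
      using that indep old vs(3) by (simp add: nth_append)
    assume i: "t \<le> i \<and> i < length ?vs'"
    show "card {j. j < i \<and> ?E' (?vs' ! i) (?vs' ! j)} = 2"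
    proof (cases "i = length vs")
      case True
      then have "{j. j < i \<and> ?E' (?vs' ! i) (?vs' ! j)} = {j. j < length vs \<and> ?E' w (vs ! j)}"
        by (auto simp: nth_append)
      with new show ?thesis by simp
    next
      case False
      then have "{j. j < i \<and> ?E' (?vs' ! i) (?vs' ! j)} = {j. j < i \<and> E (vs ! i) (vs ! j)}"
        using i old by (auto simp: nth_append)
      with False i back2 show ?thesis by simp
    qed
  qed
qed

lemma is_cycle_attach_vertex_avoiding:
  assumes cyc: "is_cycle (insert w V) (attach_vertex E w u v) cs" and "w \<notin> set cs"
  shows "is_cycle V E cs"
proof -
  have old: "attach_vertex E w u v x y = E x y" if "x \<in> set cs" "y \<in> set cs" for x y
    using that \<open>w \<notin> set cs\<close> by (auto simp: attach_vertex_def)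
  have "successively (attach_vertex E w u v) cs" "cs \<noteq> []"
    using cyc by (auto simp: is_cycle_iff_successively)
  then have "successively E cs" "E (last cs) (hd cs)"
    using successively_mono[of _ cs E] old cyc by (auto simp: is_cycle_iff_successively)
  with cyc \<open>w \<notin> set cs\<close> show ?thesis
    by (auto simp: is_cycle_iff_successively)
qed

lemma graph_ball_cycle_through_attach_vertex:
  assumes G: "simple_graph V E" and "w \<notin> V"
    and cyc: "is_cycle (insert w V) (attach_vertex E w u v) cs" and "w \<in> set cs"
  shows "v \<in> graph_ball E (length cs - 2) u"
proof -
  let ?E' = "attach_vertex E w u v"
  obtain xs ys where cs: "cs = xs @ w # ys"
    using \<open>w \<in> set cs\<close> by (meson split_list)
  define ws where "ws = ys @ xs"
  have "is_cycle (insert w V) ?E' (w # ws)"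
    using cyc is_cycle_rotate[of _ _ xs "w # ys"] by (simp add: cs ws_def)
  then have ws: "2 \<le> length ws" "distinct ws" "w \<notin> set ws" "successively ?E' ws"
    and ends: "?E' w (hd ws)" "?E' (last ws) w"
    by (auto simp: is_cycle_iff_successively successively_Cons split: if_splits)
  have path: "successively E ws"
    using ws(4) by (rule successively_mono) (use ws(3) in \<open>auto simp: attach_vertex_def\<close>)
  have "hd ws \<noteq> last ws"
    using ws(1,2) by (cases ws) (auto dest: last_in_set split: if_splits)
  moreover have "hd ws \<in> {u, v}" "last ws \<in> {u, v}"
    using ends G \<open>w \<notin> V\<close> by (auto simp: simple_graph_def attach_vertex_def)
  ultimately have "hd ws = u \<and> last ws = v \<or> hd (rev ws) = u \<and> last (rev ws) = v"
    using ws(1) by (auto simp: hd_rev last_rev)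
  moreover have "successively E (rev ws)"
    using path G by (auto simp: simple_graph_def intro: successively_mono)
  ultimately have "v \<in> graph_ball E (length ws - 1) u"
    using path ws(1) last_in_graph_ball[of E ws] last_in_graph_ball[of E "rev ws"] by force
  then show ?thesis
    by (simp add: cs ws_def add.commute)
qed

lemma girth_at_least_attach_vertex:
  assumes girth: "girth_at_least g V E" and G: "simple_graph V E" and "w \<notin> V"
    and far: "v \<notin> graph_ball E r u" and "g \<le> r + 3"
  shows "girth_at_least g (insert w V) (attach_vertex E w u v)"
  unfolding girth_at_least_def
proof (intro allI impI)
  fix cs assume cyc: "is_cycle (insert w V) (attach_vertex E w u v) cs"
  show "g \<le> length cs"
  proof (cases "w \<in> set cs")
    case False
    then show ?thesis
      using girth is_cycle_attach_vertex_avoiding[OF cyc] by (simp add: girth_at_least_def)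
  next
    case True
    then have "v \<in> graph_ball E (length cs - 2) u"
      using graph_ball_cycle_through_attach_vertex[OF G \<open>w \<notin> V\<close> cyc] by blast
    with far have "r < length cs - 2"
      using graph_ball_mono[of "length cs - 2" r E u] by (meson not_le subsetD)
    with \<open>g \<le> r + 3\<close> show ?thesis by simp
  qed
qed

lemma card_low_values_ge:
  fixes f :: "'a \<Rightarrow> nat"
  assumes "finite V" "(\<Sum>x\<in>V. f x) \<le> Suc m * (card V - t)" "t \<le> card V"
  shows "t \<le> card {x\<in>V. f x \<le> m}"
proof -
  let ?H = "{x\<in>V. \<not> f x \<le> m}"
  have "Suc m * card ?H = (\<Sum>x\<in>?H. Suc m)" by simp
  also have "\<dots> \<le> (\<Sum>x\<in>?H. f x)" by (rule sum_mono) simp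
  also have "\<dots> \<le> (\<Sum>x\<in>V. f x)" using \<open>finite V\<close> by (intro sum_mono2) auto
  finally have "card ?H \<le> card V - t"
    using assms(2) by (meson le_trans mult_le_cancel1 zero_less_Suc)
  moreover have "card V = card {x\<in>V. f x \<le> m} + card ?H"
    using \<open>finite V\<close> card_Int_Diff[of V "{x. f x \<le> m}"] by (simp add: set_diff_eq Int_def)
  ultimately show ?thesis using assms(3) by linarith
qed

lemma obtain_subset_one_side:
  assumes "finite S" "2 * n < card S"
  obtains C where "C \<subseteq> S" "n < card C" "C \<subseteq> A \<or> C \<inter> A = {}"
proof -
  have "card S = card (S \<inter> A) + card (S - A)"
    using assms(1) by (rule card_Int_Diff)
  then have "n < card (S \<inter> A) \<or> n < card (S - A)"
    using assms(2) by linarith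
  then show ?thesis
    using that[of "S \<inter> A"] that[of "S - A"] by blast
qed

lemma obtain_far_pair_low_degree:
  assumes G: "simple_graph V E" and deg4: "\<And>x. degree E x \<le> 4"
    and dsum: "(\<Sum>x\<in>V. degree E x) = 4 * (card V - t)" and "t \<le> card V" "2 * 5 ^ r < t"
  obtains u v where "u \<in> V" "v \<in> V" "degree E u \<le> 3" "degree E v \<le> 3"
    "u \<in> A \<longleftrightarrow> v \<in> A" "v \<notin> graph_ball E r u"
proof -
  have fin: "finite V" and nbrs: "\<And>x. finite {y. E x y}"
    using G finite_subset[of "{y. E _ y}" V] by (auto simp: simple_graph_def)
  let ?L = "{x\<in>V. degree E x \<le> 3}"
  have "t \<le> card ?L"
    using card_low_values_ge[of V "degree E" 3 t] fin dsum \<open>t \<le> card V\<close> by simp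
  then obtain C where C: "C \<subseteq> ?L" "5 ^ r < card C" "C \<subseteq> A \<or> C \<inter> A = {}"
    using obtain_subset_one_side[of ?L "5 ^ r" A] fin \<open>2 * 5 ^ r < t\<close> by auto
  then obtain u where "u \<in> C"
    by fastforce
  have "card (graph_ball E r u) < card C"
    using card_graph_ball_le[of E 4 r u] nbrs deg4 C(2) by simp
  then obtain v where "v \<in> C" "v \<notin> graph_ball E r u"
    using card_mono[OF finite_graph_ball[OF nbrs]] by (meson not_le subsetI)
  with \<open>u \<in> C\<close> C(1,3) show ?thesis
    by (intro that[of u v]) auto
qed

text \<open>The degree sum is twice the number of edges, 2 (card V - t).\<close>

definition greedy_invariant :: "nat \<Rightarrow> nat \<Rightarrow> 'a set \<Rightarrow> ('a \<Rightarrow> 'a \<Rightarrow> bool) \<Rightarrow> bool" where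
  "greedy_invariant g t V E \<longleftrightarrow>
     simple_graph V E \<and> exactly_2_t_degenerate t V E \<and> bipartite V E \<and> girth_at_least g V E \<and>
     (\<forall>x. degree E x \<le> 4) \<and> (\<Sum>x\<in>V. degree E x) = 4 * (card V - t)"

lemma greedy_invariant_empty_graph:
  assumes "finite V"
  shows "greedy_invariant g (card V) V (\<lambda>_ _. False)"
proof -
  obtain vs where "distinct vs" "set vs = V"
    using assms finite_distinct_list by blast
  then have "exactly_2_t_degenerate (card V) V (\<lambda>_ _. False)"
    by (auto simp: exactly_2_t_degenerate_def distinct_card intro!: exI[of _ vs])
  with assms show ?thesis
    by (auto simp: greedy_invariant_def simple_graph_def bipartite_def girth_at_least_def
        is_cycle_def degree_def)
qed

lemma greedy_invariant_attach_vertex: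
  assumes inv: "greedy_invariant g t V E" and "t \<le> card V" "w \<notin> V"
    and A: "A \<subseteq> V" "\<forall>x y. E x y \<longrightarrow> (x \<in> A \<longleftrightarrow> y \<notin> A)"
    and uv: "u \<in> V" "v \<in> V" "degree E u \<le> 3" "degree E v \<le> 3" "u \<in> A \<longleftrightarrow> v \<in> A"
    and far: "v \<notin> graph_ball E g u"
  shows "greedy_invariant g t (insert w V) (attach_vertex E w u v)"
proof -
  have G: "simple_graph V E" and deg4: "\<And>x. degree E x \<le> 4"
    and dsum: "(\<Sum>x\<in>V. degree E x) = 4 * (card V - t)"
    using inv by (auto simp: greedy_invariant_def)
  have "finite V"
    using G by (simp add: simple_graph_def)
  have "u \<noteq> v"
    using far center_in_graph_ball[of u E g] by auto
  let ?E' = "attach_vertex E w u v"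
  have "(\<Sum>x\<in>insert w V. degree ?E' x) = 4 * (card (insert w V) - t)"
    using sum_degree_attach_vertex[OF G \<open>w \<notin> V\<close> uv(1,2) \<open>u \<noteq> v\<close>] dsum \<open>finite V\<close> \<open>w \<notin> V\<close>
      \<open>t \<le> card V\<close> by simp
  moreover have "degree ?E' x \<le> 4" for x
    using deg4[of x] uv \<open>u \<noteq> v\<close>
    by (simp add: degree_attach_vertex[OF G \<open>w \<notin> V\<close> uv(1,2) \<open>u \<noteq> v\<close>])
  moreover have "exactly_2_t_degenerate t (insert w V) ?E'"
    using inv by (intro exactly_2_t_degenerate_attach_vertex[OF _ G \<open>w \<notin> V\<close> uv(1,2) \<open>u \<noteq> v\<close>])
      (simp add: greedy_invariant_def)
  moreover have "girth_at_least g (insert w V) ?E'"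
    using inv by (intro girth_at_least_attach_vertex[OF _ G \<open>w \<notin> V\<close> far])
      (auto simp: greedy_invariant_def)
  moreover note simple_graph_attach_vertex[OF G \<open>w \<notin> V\<close> uv(1,2)]
    bipartite_attach_vertex[OF G A \<open>w \<notin> V\<close> uv(1,2,5)]
  ultimately show ?thesis
    unfolding greedy_invariant_def by blast
qed

lemma greedy_invariant_extend:
  assumes inv: "greedy_invariant g t V E" and "t \<le> card V" "2 * 5 ^ g < t" "w \<notin> V"
  obtains E' where "greedy_invariant g t (insert w V) E'"
proof -
  obtain A where A: "A \<subseteq> V" "\<forall>x y. E x y \<longrightarrow> (x \<in> A \<longleftrightarrow> y \<notin> A)"
    using inv by (auto simp: greedy_invariant_def bipartite_def)
  have "simple_graph V E" "\<And>x. degree E x \<le> 4" "(\<Sum>x\<in>V. degree E x) = 4 * (card V - t)"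
    using inv by (auto simp: greedy_invariant_def)
  then obtain u v where "u \<in> V" "v \<in> V" "degree E u \<le> 3" "degree E v \<le> 3"
    "u \<in> A \<longleftrightarrow> v \<in> A" "v \<notin> graph_ball E g u"
    using assms(2,3) by (rule obtain_far_pair_low_degree)
  then have "greedy_invariant g t (insert w V) (attach_vertex E w u v)"
    by (rule greedy_invariant_attach_vertex[OF inv assms(2,4) A])
  then show ?thesis
    by (rule that)
qed

lemma exists_greedy_invariant_graph:
  assumes "2 * 5 ^ g < t" "t \<le> k"
  shows "\<exists>(V::nat set) E. card V = k \<and> greedy_invariant g t V E"
  using assms(2)
proof (induction k rule: dec_induct)
  case base
  show ?case
    using greedy_invariant_empty_graph[of "{..<t}" g] by (intro exI[of _ "{..<t}"]) auto
next
  case (step n)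
  obtain V :: "nat set" and E where "card V = n" and inv: "greedy_invariant g t V E"
    using step.IH by blast
  then have "finite V"
    by (simp add: greedy_invariant_def simple_graph_def)
  then obtain w where "w \<notin> V"
    using ex_new_if_finite[OF infinite_UNIV_nat] by blast
  then obtain E' where "greedy_invariant g t (insert w V) E'"
    using greedy_invariant_extend[OF inv] assms(1) step.hyps \<open>card V = n\<close> by blast
  moreover have "card (insert w V) = Suc n"
    using \<open>finite V\<close> \<open>w \<notin> V\<close> \<open>card V = n\<close> by simp
  ultimately show ?case by blast
qed

theorem claim3p1:
  "\<forall>g::nat. \<exists>t::nat. \<forall>k\<ge>t. \<exists>(V::nat set) E.
     simple_graph V E \<and> card V = k \<and> exactly_2_t_degenerate t V E \<and>
     bipartite V E \<and> girth_at_least g V E"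
proof
  fix g :: nat
  have "\<exists>(V::nat set) E. card V = k \<and> greedy_invariant g (2 * 5 ^ g + 1) V E"
    if "2 * 5 ^ g + 1 \<le> k" for k
    using that by (intro exists_greedy_invariant_graph) simp_all
  then show "\<exists>t. \<forall>k\<ge>t. \<exists>(V::nat set) E. simple_graph V E \<and> card V = k \<and>
      exactly_2_t_degenerate t V E \<and> bipartite V E \<and> girth_at_least g V E"
    unfolding greedy_invariant_def by blast
qed

end
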